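(* If $(A_n)_{n=0}^\infty$ is an Appell sequence, then the Wronskian Appell polynomials $(A_\lambda)_{\lambda}$ (indexed by all integer partitions $\lambda$) satisfy \[ F_\lambda^{\vphantom'}A_\lambda' = \lvert \lambda \rvert \sum_{\mu \lessdot \lambda} F_\mu A_\mu, \] where the sum is over all partitions $\mu$ covered by $\lambda$ in Young's lattice, i.e. obtained from $\lambda$ by removing one cell of its diagram.
   Context: An Appell sequence is a sequence of polynomials $(A_n)_{n\ge0}$ with $A_0=1$ and $A_n'=nA_{n-1}$ for $n\ge1$. For a partition $\lambda$ of length $r$, let $(n_1,\dots,n_r)=(\lambda_r,\lambda_{r-1}+1,\dots,\lambda_1+r-1)$ and $A_\lambda=\operatorname{Wr}[A_{n_1},\dots,A_{n_r}]/\Delta(n_1,\dots,n_r)$, where $\operatorname{Wr}$ is the Wronskian and $\Delta(x_1,\dots,x_r)=\prod_{i<j}(x_j-x_i)$; $A_\emptyset=1$. $F_\lambda$ is the number of standard Young tableaux of shape $\lambda$ and $|\lambda|$ its size. *)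

theory Defs
  imports "HOL-Computational_Algebra.Polynomial" "Jordan_Normal_Form.Determinant"
begin

definition appell :: "(nat \<Rightarrow> complex poly) \<Rightarrow> bool" where
  "appell A \<longleftrightarrow> A 0 = 1 \<and> (\<forall>n\<ge>1. pderiv (A n) = of_nat n * A (n - 1))"

definition is_partition :: "nat list \<Rightarrow> bool" where
  "is_partition lam \<longleftrightarrow> sorted_wrt (\<ge>) lam \<and> (\<forall>x\<in>set lam. 0 < x)"

definition psize :: "nat list \<Rightarrow> nat" where
  "psize lam = sum_list lam"

definition cells :: "nat list \<Rightarrow> (nat \<times> nat) set" where
  "cells lam = {(i, j). i < length lam \<and> j < lam ! i}"

definition SYT :: "nat list \<Rightarrow> (nat \<times> nat \<Rightarrow> nat) set" where
  "SYT lam = {T. bij_betw T (cells lam) {1..psize lam}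
              \<and> (\<forall>c. c \<notin> cells lam \<longrightarrow> T c = 0)
              \<and> (\<forall>i j. (i, Suc j) \<in> cells lam \<longrightarrow> T (i, j) < T (i, Suc j))
              \<and> (\<forall>i j. (Suc i, j) \<in> cells lam \<longrightarrow> T (i, j) < T (Suc i, j))}"

definition num_SYT :: "nat list \<Rightarrow> nat" where
  "num_SYT lam = card (SYT lam)"

definition covered_by :: "nat list \<Rightarrow> nat list \<Rightarrow> bool" where
  "covered_by mu lam \<longleftrightarrow> is_partition mu \<and> cells mu \<subseteq> cells lam
                         \<and> card (cells lam - cells mu) = 1"

text \<open>The sequence (n_1,...,n_r) = (lam_r, lam_(r-1)+1, ..., lam_1 + r - 1), 0-indexed.\<close>
definition degs :: "nat list \<Rightarrow> nat \<Rightarrow> nat" where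
  "degs lam k = lam ! (length lam - 1 - k) + k"

definition wronskian :: "nat \<Rightarrow> (nat \<Rightarrow> complex poly) \<Rightarrow> complex poly" where
  "wronskian r f = det (mat r r (\<lambda>(i, j). (pderiv ^^ i) (f j)))"

definition vandermonde_int :: "nat \<Rightarrow> (nat \<Rightarrow> nat) \<Rightarrow> int" where
  "vandermonde_int r x = (\<Prod>j<r. \<Prod>i<j. int (x j) - int (x i))"

definition wronskian_appell :: "(nat \<Rightarrow> complex poly) \<Rightarrow> nat list \<Rightarrow> complex poly" where
  "wronskian_appell A lam =
     (if lam = [] then 1
      else smult (inverse (of_int (vandermonde_int (length lam) (degs lam))))
             (wronskian (length lam) (\<lambda>k. A (degs lam k))))"

end

theory Submission
  imports Defs
begin

text \<open>Put \<open>a\<^sub>n = A\<^sub>n / n!\<close>, so that \<open>a\<^sub>n' = a\<^sub>n\<^sub>-\<^sub>1\<close> and \<open>a\<^sub>0 = 1\<close>, and let \<open>W\<^sub>\<lambda>\<close> be the Wronskian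
  of \<open>a\<^sub>n\<^sub>1, \<dots>, a\<^sub>n\<^sub>r\<close>, so \<open>W\<^sub>\<lambda> = A\<^sub>\<lambda> \<Delta>(n) / \<Prod> n\<^sub>k!\<close>. Differentiating \<open>W\<^sub>\<lambda>\<close> column by
  column lowers one \<open>n\<^sub>k\<close> by one: either two columns become equal, or a corner cell of \<open>\<lambda>\<close> is
  removed. Hence \<open>W\<^sub>\<lambda>' = \<Sum>\<^sub>\<mu> W\<^sub>\<mu>\<close> over the partitions \<open>\<mu>\<close> covered by \<open>\<lambda>\<close>.
  For the monomials \<open>A\<^sub>n = x\<^sup>n\<close> one gets \<open>W\<^sub>\<lambda> = h\<^sub>\<lambda> x^|\<lambda>|\<close> with \<open>h\<^sub>\<lambda> = \<Delta>(n) / \<Prod> n\<^sub>k!\<close>, and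
  the same identity gives \<open>|\<lambda>| h\<^sub>\<lambda> = \<Sum>\<^sub>\<mu> h\<^sub>\<mu>\<close>. Removing the largest entry of a standard tableau shows
  \<open>F\<^sub>\<lambda> = \<Sum>\<^sub>\<mu> F\<^sub>\<mu>\<close>, so by induction \<open>F\<^sub>\<lambda> = |\<lambda>|! h\<^sub>\<lambda>\<close> (Frobenius' formula). Therefore
  \<open>F\<^sub>\<lambda> A\<^sub>\<lambda> = |\<lambda>|! W\<^sub>\<lambda>\<close>, and the theorem is the derivative identity for \<open>W\<^sub>\<lambda>\<close>.\<close>

section \<open>Wronskians\<close>

lemma det_mat_scale_columns:
  fixes c :: "nat \<Rightarrow> 'a::comm_ring_1"
  shows "det (mat r r (\<lambda>(i, j). c j * a i j)) = (\<Prod>j<r. c j) * det (mat r r (\<lambda>(i, j). a i j))"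
proof -
  have prod_permuted: "(\<Prod>i=0..<r. c (p i)) = (\<Prod>j<r. c j)" if "p permutes {0..<r}" for p
    using prod.reindex_bij_betw[OF permutes_imp_bij[OF that], of c] by (simp add: atLeast0LessThan)
  have "det (mat r r (\<lambda>(i, j). c j * a i j)) =
      (\<Sum>p\<in>{p. p permutes {0..<r}}. signof p * (\<Prod>i=0..<r. c (p i) * a i (p i)))"
    by (subst det_def'[of _ r]) (auto intro!: sum.cong prod.cong simp: permutes_in_image)
  also have "\<dots> = (\<Sum>p\<in>{p. p permutes {0..<r}}.
      (\<Prod>j<r. c j) * (signof p * (\<Prod>i=0..<r. a i (p i))))"
    by (intro sum.cong refl) (simp add: prod.distrib prod_permuted mult_ac)
  also have "\<dots> = (\<Prod>j<r. c j) * det (mat r r (\<lambda>(i, j). a i j))"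
    by (subst det_def'[of _ r])
      (auto simp: sum_distrib_left permutes_in_image intro!: sum.cong prod.cong arg_cong2[where f="(*)"])
  finally show ?thesis .
qed

lemma det_first_column_unit:
  fixes M :: "'a::comm_ring_1 mat"
  assumes M: "M \<in> carrier_mat (Suc r) (Suc r)" and "M $$ (0, 0) = 1"
    and "\<And>i. 0 < i \<Longrightarrow> i < Suc r \<Longrightarrow> M $$ (i, 0) = 0"
  shows "det M = det (mat r r (\<lambda>(i, j). M $$ (Suc i, Suc j)))"
proof -
  have "det M = (\<Sum>i<Suc r. M $$ (i, 0) * cofactor M i 0)"
    by (rule laplace_expansion_column[OF M]) simp
  also have "\<dots> = det (mat_delete M 0 0)"
    using assms by (simp add: sum.lessThan_Suc_shift cofactor_def del: sum.lessThan_Suc)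
  also have "mat_delete M 0 0 = mat r r (\<lambda>(i, j). M $$ (Suc i, Suc j))"
    using M by (auto simp: mat_delete_def intro!: eq_matI)
  finally show ?thesis .
qed

lemma wronskian_leibniz:
  "wronskian r f = (\<Sum>p\<in>{p. p permutes {0..<r}}. signof p * (\<Prod>i=0..<r. (pderiv ^^ i) (f (p i))))"
  unfolding wronskian_def
  by (subst det_def'[of _ r]) (auto intro!: sum.cong prod.cong simp: permutes_in_image)

lemma wronskian_cong:
  assumes "\<And>j. j < r \<Longrightarrow> f j = g j"
  shows "wronskian r f = wronskian r g"
  unfolding wronskian_leibniz
  by (intro sum.cong refl arg_cong2[where f="(*)"] prod.cong) (auto simp: assms permutes_in_image)

lemma wronskian_smult:
  "wronskian r (\<lambda>j. smult (c j) (f j)) = smult (\<Prod>j<r. c j) (wronskian r f)"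
proof -
  have "wronskian r (\<lambda>j. smult (c j) (f j)) = det (mat r r (\<lambda>(i, j). [:c j:] * (pderiv ^^ i) (f j)))"
    unfolding wronskian_def by (simp add: higher_pderiv_smult)
  also have "\<dots> = (\<Prod>j<r. [:c j:]) * wronskian r f"
    unfolding wronskian_def by (subst det_mat_scale_columns) simp
  also have "(\<Prod>j<r. [:c j:]) = [:\<Prod>j<r. c j:]"
    by (induction r) auto
  finally show ?thesis by simp
qed

lemma wronskian_first_one:
  assumes "f 0 = 1"
  shows "wronskian (Suc r) f = wronskian r (\<lambda>j. pderiv (f (Suc j)))"
proof -
  have "(pderiv ^^ i) (1 :: complex poly) = (if i = 0 then 1 else 0)" for i
    by (induction i) (auto simp: pderiv_0)
  then show ?thesis
    unfolding wronskian_def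
    by (subst det_first_column_unit) (auto simp: assms funpow_Suc_right simp del: funpow.simps
        intro!: arg_cong[where f=det] eq_matI)
qed

lemma wronskian_equal_columns:
  assumes "i \<noteq> j" "i < r" "j < r" "f i = f j"
  shows "wronskian r f = 0"
  unfolding wronskian_def
  by (rule det_identical_columns[OF _ assms(1-3)]) (use assms in \<open>auto intro!: eq_vecI\<close>)

lemma pderiv_prod_higher_pderiv_permutes:
  assumes p: "p permutes {0..<r}"
  shows "pderiv (\<Prod>i=0..<r. (pderiv ^^ i) (f (p i))) =
    (\<Sum>k<r. \<Prod>i=0..<r. (pderiv ^^ i) ((f(k := pderiv (f k))) (p i)))"
proof -
  have "pderiv (\<Prod>i=0..<r. (pderiv ^^ i) (f (p i))) =
      (\<Sum>a=0..<r. (\<Prod>i\<in>{0..<r}-{a}. (pderiv ^^ i) (f (p i))) * pderiv ((pderiv ^^ a) (f (p a))))"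
    by (simp add: pderiv_prod)
  also have "\<dots> = (\<Sum>a=0..<r. \<Prod>i=0..<r. (pderiv ^^ i) ((f(p a := pderiv (f (p a)))) (p i)))"
  proof (intro sum.cong refl)
    fix a assume a: "a \<in> {0..<r}"
    have "(\<Prod>i\<in>{0..<r}-{a}. (pderiv ^^ i) ((f(p a := pderiv (f (p a)))) (p i))) =
        (\<Prod>i\<in>{0..<r}-{a}. (pderiv ^^ i) (f (p i)))"
      using permutes_inj[OF p] by (intro prod.cong refl) (auto dest: injD)
    moreover have "(pderiv ^^ a) (pderiv (f (p a))) = pderiv ((pderiv ^^ a) (f (p a)))"
      by (metis comp_apply funpow_Suc_right funpow_swap1)
    ultimately show "(\<Prod>i\<in>{0..<r}-{a}. (pderiv ^^ i) (f (p i))) * pderiv ((pderiv ^^ a) (f (p a))) =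
        (\<Prod>i=0..<r. (pderiv ^^ i) ((f(p a := pderiv (f (p a)))) (p i)))"
      using a by (subst prod.remove[of _ a]) (auto simp: mult_ac)
  qed
  also have "\<dots> = (\<Sum>k<r. \<Prod>i=0..<r. (pderiv ^^ i) ((f(k := pderiv (f k))) (p i)))"
    using sum.reindex_bij_betw[OF permutes_imp_bij[OF p],
        of "\<lambda>k. \<Prod>i=0..<r. (pderiv ^^ i) ((f(k := pderiv (f k))) (p i))"]
    by (simp add: atLeast0LessThan)
  finally show ?thesis .
qed

lemma pderiv_wronskian:
  "pderiv (wronskian r f) = (\<Sum>k<r. wronskian r (f(k := pderiv (f k))))"
proof -
  have pderiv_sign: "pderiv ((signof p :: complex poly) * q) = signof p * pderiv q" for p q
    by (simp add: pderiv_mult sign_def pderiv_minus)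
  have "pderiv (wronskian r f) =
      (\<Sum>p\<in>{p. p permutes {0..<r}}. signof p * pderiv (\<Prod>i=0..<r. (pderiv ^^ i) (f (p i))))"
    unfolding wronskian_leibniz higher_pderiv_sum[of 1, simplified] pderiv_sign ..
  also have "\<dots> = (\<Sum>p\<in>{p. p permutes {0..<r}}. \<Sum>k<r.
      signof p * (\<Prod>i=0..<r. (pderiv ^^ i) ((f(k := pderiv (f k))) (p i))))"
    by (intro sum.cong refl) (simp add: pderiv_prod_higher_pderiv_permutes sum_distrib_left)
  also have "\<dots> = (\<Sum>k<r. wronskian r (f(k := pderiv (f k))))"
    unfolding wronskian_leibniz by (rule sum.swap)
  finally show ?thesis .
qed

section \<open>Wronskians of monomials\<close>

definition falling_factorial :: "'a::comm_ring_1 \<Rightarrow> nat \<Rightarrow> 'a" where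
  "falling_factorial z i = (\<Prod>k<i. z - of_nat k)"

lemma falling_factorial_0 [simp]: "falling_factorial z 0 = 1"
  by (simp add: falling_factorial_def)

lemma falling_factorial_Suc: "falling_factorial z (Suc i) = falling_factorial z i * (z - of_nat i)"
  by (simp add: falling_factorial_def)

lemma falling_factorial_of_nat_eq_0: "m < i \<Longrightarrow> falling_factorial (of_nat m) i = 0"
  unfolding falling_factorial_def by (rule prod_zero) auto

text \<open>The matrix \<open>L\<close> performs the row operations
  \<open>row i := row i - (x 0 - (i - 1)) * row (i - 1)\<close>, which turn the first column into
  \<open>e\<^sub>0\<close> and column \<open>j\<close> into \<open>(x j - x 0)\<close> times the falling factorials of \<open>x j\<close> of one
  degree less.\<close>
lemma det_falling_factorial_vandermonde:
  fixes x :: "nat \<Rightarrow> 'a::comm_ring_1"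
  shows "det (mat r r (\<lambda>(i, j). falling_factorial (x j) i)) = (\<Prod>j<r. \<Prod>i<j. x j - x i)"
proof (induction r arbitrary: x)
  case 0
  then show ?case by (simp add: det_dim_zero)
next
  case (Suc r)
  define M where "M = mat (Suc r) (Suc r) (\<lambda>(i, j). falling_factorial (x j) i)"
  define L :: "'a mat" where "L = mat (Suc r) (Suc r)
    (\<lambda>(i, j). if i = j then 1 else if i = Suc j then - (x 0 - of_nat j) else 0)"
  have M: "M \<in> carrier_mat (Suc r) (Suc r)" and L: "L \<in> carrier_mat (Suc r) (Suc r)"
    by (auto simp: M_def L_def)
  have "det L = prod_list (map (\<lambda>i. 1) [0..<Suc r])"
    by (subst det_lower_triangular[OF _ L])
      (auto simp: L_def diag_mat_def intro!: arg_cong[where f=prod_list] map_cong simp del: upt_Suc)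
  then have det_L: "det L = 1"
    by (simp add: map_replicate_const)
  have LM: "(L * M) $$ (i, j) = (if i = 0 then 1 else falling_factorial (x j) (i - 1) * (x j - x 0))"
    if i: "i < Suc r" and j: "j < Suc r" for i j
  proof -
    have "(L * M) $$ (i, j) = (\<Sum>k<Suc r. L $$ (i, k) * M $$ (k, j))"
      using i j L M by (simp add: scalar_prod_def atLeast0LessThan)
    also have "\<dots> = (\<Sum>k<Suc r. (if k = i then M $$ (k, j) else 0) +
          (if Suc k = i then - (x 0 - of_nat k) * M $$ (k, j) else 0))"
      using i by (intro sum.cong refl) (auto simp: L_def)
    also have "\<dots> = M $$ (i, j) + (if i = 0 then 0 else - (x 0 - of_nat (i - 1)) * M $$ (i - 1, j))"
      using i by (cases i) (simp_all add: sum.distrib sum.delta')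
    also have "\<dots> = (if i = 0 then 1 else falling_factorial (x j) (i - 1) * (x j - x 0))"
      using i j by (cases i) (auto simp: M_def falling_factorial_Suc algebra_simps)
    finally show ?thesis .
  qed
  have "det M = det (L * M)"
    using det_mult[OF L M] det_L by simp
  also have "\<dots> = det (mat r r (\<lambda>(i, j). (L * M) $$ (Suc i, Suc j)))"
    by (rule det_first_column_unit) (use L M LM in auto)
  also have "\<dots> = det (mat r r (\<lambda>(i, j). (x (Suc j) - x 0) * falling_factorial (x (Suc j)) i))"
    by (intro arg_cong[where f=det] eq_matI) (auto simp: LM mult_ac)
  also have "\<dots> = (\<Prod>j<r. x (Suc j) - x 0) * (\<Prod>j<r. \<Prod>i<j. x (Suc j) - x (Suc i))"
    by (simp only: det_mat_scale_columns Suc.IH)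
  also have "\<dots> = (\<Prod>j<Suc r. \<Prod>i<j. x j - x i)"
    by (simp add: prod.lessThan_Suc_shift prod.distrib del: prod.lessThan_Suc)
  finally show ?case by (simp add: M_def)
qed

lemma higher_pderiv_monom_one:
  "(pderiv ^^ i) (monom (1 :: 'a::idom) m) =
    monom (falling_factorial (of_nat m) i) (m - i)"
proof (induction i)
  case 0
  then show ?case by simp
next
  case (Suc i)
  have "of_nat (m - i) * falling_factorial (of_nat m) i = (falling_factorial (of_nat m) (Suc i) :: 'a)"
    by (cases "i \<le> m") (auto simp: falling_factorial_Suc of_nat_diff falling_factorial_of_nat_eq_0 mult_ac)
  then show ?case
    using Suc by (simp add: pderiv_monom)
qed

lemma prod_monom:
  "finite S \<Longrightarrow> (\<Prod>i\<in>S. monom (c i) (e i)) = monom (\<Prod>i\<in>S. c i) (\<Sum>i\<in>S. e i)"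
  by (induction S rule: finite_induct) (auto simp: mult_monom)

lemma wronskian_monomials:
  "wronskian r (\<lambda>j. monom 1 (n j)) =
     smult (det (mat r r (\<lambda>(i, j). falling_factorial (of_nat (n j)) i)))
       (monom 1 ((\<Sum>j<r. n j) - (\<Sum>i<r. i)))"
proof -
  let ?e = "(\<Sum>j<r. n j) - (\<Sum>i<r. i)"
  have diagonal_product: "(\<Prod>i=0..<r. (pderiv ^^ i) (monom (1 :: complex) (n (p i)))) =
        monom (\<Prod>i=0..<r. falling_factorial (of_nat (n (p i))) i) ?e" if p: "p permutes {0..<r}" for p
  proof (cases "\<forall>i<r. i \<le> n (p i)")
    case True
    have "(\<Sum>i=0..<r. n (p i) - i) = (\<Sum>i=0..<r. n (p i)) - (\<Sum>i=0..<r. i)"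
      by (rule sum_subtractf_nat) (use True in auto)
    also have "(\<Sum>i=0..<r. n (p i)) = (\<Sum>j=0..<r. n j)"
      using sum.reindex_bij_betw[OF permutes_imp_bij[OF p], of n] by simp
    finally have "(\<Sum>i=0..<r. n (p i) - i) = ?e"
      by (simp add: atLeast0LessThan)
    then show ?thesis
      by (simp add: higher_pderiv_monom_one prod_monom)
  next
    case False
    then obtain i where i: "i < r" "n (p i) < i" by auto
    then have "(pderiv ^^ i) (monom (1 :: complex) (n (p i))) = 0"
      by (simp add: higher_pderiv_monom_one falling_factorial_of_nat_eq_0)
    then have "(\<Prod>i=0..<r. (pderiv ^^ i) (monom (1 :: complex) (n (p i)))) = 0"
      using i by (intro prod_zero) auto
    moreover have "(\<Prod>i=0..<r. falling_factorial (of_nat (n (p i))) i) = (0 :: complex)"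
      using i by (intro prod_zero) (auto intro!: bexI[of _ i] falling_factorial_of_nat_eq_0)
    ultimately show ?thesis
      by (simp del: prod_zero_iff)
  qed
  have "wronskian r (\<lambda>j. monom 1 (n j)) = (\<Sum>p\<in>{p. p permutes {0..<r}}.
      smult (signof p * (\<Prod>i=0..<r. falling_factorial (of_nat (n (p i))) i)) (monom 1 ?e))"
    unfolding wronskian_leibniz
    by (intro sum.cong refl) (auto simp: diagonal_product smult_monom of_int_poly monom_0 mult_monom[symmetric]
        simp del: mult_monom)
  also have "\<dots> = smult (det (mat r r (\<lambda>(i, j). falling_factorial (of_nat (n j)) i))) (monom 1 ?e)"
    by (subst det_def'[of _ r]) (auto simp: smult_sum permutes_in_image
        intro!: sum.cong arg_cong2[where f=smult] arg_cong2[where f="(*)"] prod.cong)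
  finally show ?thesis .
qed

section \<open>Young diagrams and their corners\<close>

lemma partition_nth_antimono:
  "is_partition lam \<Longrightarrow> i \<le> j \<Longrightarrow> j < length lam \<Longrightarrow> lam ! j \<le> lam ! i"
  unfolding is_partition_def by (cases "i = j") (auto simp: sorted_wrt_iff_nth_less)

lemma partition_nth_pos: "is_partition lam \<Longrightarrow> i < length lam \<Longrightarrow> 0 < lam ! i"
  unfolding is_partition_def by auto

lemma is_partitionI:
  assumes "\<And>i j. i < j \<Longrightarrow> j < length lam \<Longrightarrow> lam ! j \<le> lam ! i"
    and "\<And>i. i < length lam \<Longrightarrow> 0 < lam ! i"
  shows "is_partition lam"
  unfolding is_partition_def using assms by (auto simp: sorted_wrt_iff_nth_less in_set_conv_nth)

lemma mem_cells_iff: "(i, j) \<in> cells lam \<longleftrightarrow> i < length lam \<and> j < lam ! i"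
  by (simp add: cells_def)

lemma cells_left: "(i, Suc j) \<in> cells lam \<Longrightarrow> (i, j) \<in> cells lam"
  by (simp add: mem_cells_iff)

lemma cells_up: "is_partition lam \<Longrightarrow> (Suc i, j) \<in> cells lam \<Longrightarrow> (i, j) \<in> cells lam"
  using partition_nth_antimono[of lam i "Suc i"] by (auto simp: mem_cells_iff)

lemma cells_eq_Sigma: "cells lam = Sigma {..<length lam} (\<lambda>i. {..<lam ! i})"
  by (auto simp: mem_cells_iff)

lemma finite_cells: "finite (cells lam)"
  by (simp add: cells_eq_Sigma)

lemma card_cells: "card (cells lam) = psize lam"
  by (simp add: cells_eq_Sigma card_SigmaI psize_def sum_list_sum_nth atLeast0LessThan)

lemma psize_pos: "is_partition lam \<Longrightarrow> lam \<noteq> [] \<Longrightarrow> 0 < psize lam"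
  using partition_nth_pos[of lam 0] card_cells[of lam] finite_cells[of lam]
  by (metis card_gt_0_iff empty_iff length_greater_0_conv mem_cells_iff)

lemma partition_eqI_cells:
  assumes "is_partition lam" "is_partition mu" "cells lam = cells mu"
  shows "lam = mu"
proof -
  have rows: "{i. (i, 0) \<in> cells nu} = {..<length nu}" if "is_partition nu" for nu
    using partition_nth_pos[OF that] by (auto simp: mem_cells_iff)
  have "length lam = length mu"
    using rows[OF assms(1)] rows[OF assms(2)] assms(3) by (metis card_lessThan)
  moreover have "lam ! i = mu ! i" if "i < length lam" for i
  proof -
    have "{..<lam ! i} = {j. (i, j) \<in> cells lam}" and "{..<mu ! i} = {j. (i, j) \<in> cells mu}"
      using that \<open>length lam = length mu\<close> by (auto simp: mem_cells_iff)
    then show ?thesis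
      using assms(3) by (metis card_lessThan)
  qed
  ultimately show ?thesis
    by (rule nth_equalityI)
qed

lemma psize_eq_Suc_if_cells_Diff:
  assumes "c \<in> cells lam" "cells mu = cells lam - {c}"
  shows "psize lam = Suc (psize mu)"
proof -
  have "Suc (card (cells mu)) = card (cells lam)"
    using card_Suc_Diff1[OF finite_cells, of c lam] assms by simp
  then show ?thesis
    by (simp only: card_cells)
qed

definition corner :: "nat list \<Rightarrow> nat \<Rightarrow> bool" where
  "corner lam i \<longleftrightarrow> i < length lam \<and> (Suc i = length lam \<or> lam ! Suc i < lam ! i)"

definition remove_corner :: "nat list \<Rightarrow> nat \<Rightarrow> nat list" where
  "remove_corner lam i = (if lam ! i = 1 then take i lam else lam[i := lam ! i - 1])"

lemma finite_corners: "finite {i. corner lam i}"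
  by (rule finite_subset[of _ "{..<length lam}"]) (auto simp: corner_def)

lemma corner_cell_mem: "is_partition lam \<Longrightarrow> corner lam i \<Longrightarrow> (i, lam ! i - 1) \<in> cells lam"
  using partition_nth_pos[of lam i] by (auto simp: corner_def mem_cells_iff)

lemma corner_if_no_successor:
  assumes "(i, j) \<in> cells lam" "(i, Suc j) \<notin> cells lam" "(Suc i, j) \<notin> cells lam"
  shows "corner lam i" and "j = lam ! i - 1"
  using assms by (auto simp: corner_def mem_cells_iff)

lemma corner_last_row:
  assumes "is_partition lam" "corner lam i" "lam ! i = 1"
  shows "Suc i = length lam"
proof (rule ccontr)
  assume "Suc i \<noteq> length lam"
  then have "Suc i < length lam" "lam ! Suc i < lam ! i"
    using assms(2) by (auto simp: corner_def)
  then show False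
    using partition_nth_pos[OF assms(1), of "Suc i"] assms(3) by simp
qed

lemma is_partition_remove_corner:
  assumes p: "is_partition lam" and c: "corner lam i"
  shows "is_partition (remove_corner lam i)"
proof (cases "lam ! i = 1")
  case True
  then show ?thesis
    using p unfolding remove_corner_def is_partition_def
    by (auto simp: sorted_wrt_take dest: in_set_takeD)
next
  case False
  have i: "i < length lam" and pos: "0 < lam ! i"
    using c partition_nth_pos[OF p] by (auto simp: corner_def)
  show ?thesis
    unfolding remove_corner_def using False
  proof (simp, intro is_partitionI)
    fix a b assume ab: "a < b" "b < length (lam[i := lam ! i - Suc 0])"
    have "lam ! b \<le> lam ! a" and "a = i \<Longrightarrow> lam ! b < lam ! i"
      using partition_nth_antimono[OF p, of a b] partition_nth_antimono[OF p, of "Suc i" b] c ab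
      by (auto simp: corner_def)
    then show "lam[i := lam ! i - Suc 0] ! b \<le> lam[i := lam ! i - Suc 0] ! a"
      using ab i partition_nth_antimono[OF p, of a i] by (auto simp: nth_list_update)
  next
    fix a assume "a < length (lam[i := lam ! i - Suc 0])"
    then show "0 < lam[i := lam ! i - Suc 0] ! a"
      using partition_nth_pos[OF p, of a] False pos i by (auto simp: nth_list_update)
  qed
qed

lemma cells_remove_corner:
  assumes p: "is_partition lam" and c: "corner lam i"
  shows "cells (remove_corner lam i) = cells lam - {(i, lam ! i - 1)}"
proof (cases "lam ! i = 1")
  case True
  then show ?thesis
    using corner_last_row[OF p c True] unfolding remove_corner_def
    by (auto simp: mem_cells_iff) (metis less_antisym less_Suc0)
next
  case False
  then show ?thesis
    using c partition_nth_pos[OF p, of i] unfolding remove_corner_def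
    by (auto simp: corner_def mem_cells_iff nth_list_update split: if_splits)
qed

lemma psize_remove_corner:
  assumes "is_partition lam" "corner lam i"
  shows "psize lam = Suc (psize (remove_corner lam i))"
  using psize_eq_Suc_if_cells_Diff[OF corner_cell_mem[OF assms] cells_remove_corner[OF assms]] .

lemma bij_betw_remove_corner:
  assumes p: "is_partition lam"
  shows "bij_betw (remove_corner lam) {i. corner lam i} {mu. covered_by mu lam}"
proof (rule bij_betw_imageI)
  show "inj_on (remove_corner lam) {i. corner lam i}"
  proof
    fix i j assume "i \<in> {i. corner lam i}" "j \<in> {i. corner lam i}"
      and "remove_corner lam i = remove_corner lam j"
    then have "cells lam - {(i, lam ! i - 1)} = cells lam - {(j, lam ! j - 1)}"
      and "(i, lam ! i - 1) \<in> cells lam"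
      using cells_remove_corner[OF p] corner_cell_mem[OF p] by (metis mem_Collect_eq)+
    then show "i = j" by blast
  qed
  show "remove_corner lam ` {i. corner lam i} = {mu. covered_by mu lam}"
  proof (intro equalityI subsetI)
    fix mu assume "mu \<in> remove_corner lam ` {i. corner lam i}"
    then obtain i where c: "corner lam i" and mu: "mu = remove_corner lam i" by auto
    then have "cells lam - cells mu = {(i, lam ! i - 1)}"
      using cells_remove_corner[OF p c] corner_cell_mem[OF p c] by auto
    then show "mu \<in> {mu. covered_by mu lam}"
      using is_partition_remove_corner[OF p c] cells_remove_corner[OF p c] mu
      by (auto simp: covered_by_def)
  next
    fix mu assume "mu \<in> {mu. covered_by mu lam}"
    then have pm: "is_partition mu" and sub: "cells mu \<subseteq> cells lam"
      and "card (cells lam - cells mu) = 1"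
      by (auto simp: covered_by_def)
    then obtain i j where cell: "cells lam - cells mu = {(i, j)}"
      by (metis card_1_singletonE surj_pair)
    then have cells_mu: "cells mu = cells lam - {(i, j)}"
      using sub by auto
    have "(i, Suc j) \<notin> cells lam" "(Suc i, j) \<notin> cells lam"
      using cells_left[of i j mu] cells_up[OF pm, of i j] cells_mu by auto
    then have c: "corner lam i" and j: "j = lam ! i - 1"
      using corner_if_no_successor cell by blast+
    have "mu = remove_corner lam i"
      using partition_eqI_cells[OF pm is_partition_remove_corner[OF p c]]
      by (simp add: cells_remove_corner[OF p c] cells_mu j)
    then show "mu \<in> remove_corner lam ` {i. corner lam i}"
      using c by blast
  qed
qed

section \<open>Standard Young tableaux\<close>

lemma finite_SYT: "finite (SYT lam)"
proof -
  have "SYT lam \<subseteq> {f. \<forall>x. (x \<in> cells lam \<longrightarrow> f x \<in> {1..psize lam}) \<and> (x \<notin> cells lam \<longrightarrow> f x = 0)}"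
    unfolding SYT_def by (auto dest: bij_betwE)
  then show ?thesis
    by (rule finite_subset) (rule finite_set_of_finite_funs[OF finite_cells finite_atLeastAtMost])
qed

lemma SYT_entry_le: "T \<in> SYT lam \<Longrightarrow> x \<in> cells lam \<Longrightarrow> T x \<le> psize lam"
  unfolding SYT_def by (auto dest: bij_betwE)

lemma SYT_max_entry_at_corner:
  assumes T: "T \<in> SYT lam" and p: "is_partition lam" and ne: "lam \<noteq> []"
  obtains i where "corner lam i" "T (i, lam ! i - 1) = psize lam"
proof -
  have "psize lam \<in> T ` cells lam"
    using T psize_pos[OF p ne] by (auto simp: SYT_def bij_betw_def)
  then obtain i j where ij: "(i, j) \<in> cells lam" "T (i, j) = psize lam"
    by auto
  have "T (i, j) < T (i, Suc j)" if "(i, Suc j) \<in> cells lam"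
    using T that by (simp add: SYT_def)
  then have "(i, Suc j) \<notin> cells lam"
    using SYT_entry_le[OF T, of "(i, Suc j)"] ij(2) by linarith
  have "T (i, j) < T (Suc i, j)" if "(Suc i, j) \<in> cells lam"
    using T that by (simp add: SYT_def)
  then have "(Suc i, j) \<notin> cells lam"
    using SYT_entry_le[OF T, of "(Suc i, j)"] ij(2) by linarith
  with \<open>(i, Suc j) \<notin> cells lam\<close> show ?thesis
    using that corner_if_no_successor[OF ij(1)] ij(2) by blast
qed

lemma SYT_remove_max_entry:
  assumes T: "T \<in> SYT lam" and pm: "is_partition mu"
    and c: "c \<in> cells lam" and cells_mu: "cells mu = cells lam - {c}" and max: "T c = psize lam"
  shows "T(c := 0) \<in> SYT mu"
proof -
  have size: "psize lam = Suc (psize mu)"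
    using psize_eq_Suc_if_cells_Diff c cells_mu by blast
  then have entries: "{1..psize lam} - {psize lam} = {1..psize mu}"
    by auto
  have "bij_betw T (cells lam - {c}) ({1..psize lam} - {psize lam})"
    using T c max size by (intro bij_betw_DiffI[of T _ _ "{c}" "{psize lam}"]) (auto simp: SYT_def)
  then have "bij_betw (T(c := 0)) (cells mu) {1..psize mu}"
    unfolding cells_mu entries by (rule bij_betw_cong[THEN iffD1, rotated]) auto
  moreover have "\<forall>x. x \<notin> cells mu \<longrightarrow> (T(c := 0)) x = 0"
    using T cells_mu by (auto simp: SYT_def)
  moreover have "(T(c := 0)) (i, j) < (T(c := 0)) (i, Suc j)" if "(i, Suc j) \<in> cells mu" for i j
    using T that cells_left[OF that] by (auto simp: SYT_def cells_mu)
  moreover have "(T(c := 0)) (i, j) < (T(c := 0)) (Suc i, j)" if "(Suc i, j) \<in> cells mu" for i j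
    using T that cells_up[OF pm that] by (auto simp: SYT_def cells_mu)
  ultimately show ?thesis
    unfolding SYT_def by blast
qed

lemma SYT_add_max_entry:
  assumes T: "T \<in> SYT mu" and p: "is_partition lam"
    and c: "(a, b) \<in> cells lam" and cells_mu: "cells mu = cells lam - {(a, b)}"
    and right: "(a, Suc b) \<notin> cells lam" and below: "(Suc a, b) \<notin> cells lam"
  shows "T((a, b) := psize lam) \<in> SYT lam"
proof -
  let ?T = "T((a, b) := psize lam)"
  have size: "psize lam = Suc (psize mu)"
    using psize_eq_Suc_if_cells_Diff c cells_mu by blast
  have T_less: "T x < psize lam" if "x \<in> cells mu" for x
    using SYT_entry_le[OF T that] size by simp
  have "bij_betw T (cells mu) {1..psize mu}"
    using T by (simp add: SYT_def)
  then have "bij_betw ?T (cells mu) {1..psize mu}"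
    by (rule bij_betw_cong[THEN iffD1, rotated]) (auto simp: cells_mu)
  then have "bij_betw ?T (cells mu \<union> {(a, b)}) ({1..psize mu} \<union> {psize lam})"
    using notIn_Un_bij_betw[of "(a, b)" "cells mu" ?T] cells_mu size by auto
  moreover have "cells mu \<union> {(a, b)} = cells lam"
    using c cells_mu by blast
  moreover have "{1..psize mu} \<union> {psize lam} = {1..psize lam}"
    unfolding size by auto
  ultimately have "bij_betw ?T (cells lam) {1..psize lam}"
    by simp
  moreover have "?T (i, j) < ?T (i, Suc j)" if ij: "(i, Suc j) \<in> cells lam" for i j
  proof -
    have "(i, j) \<in> cells mu"
      using cells_left[OF ij] ij right unfolding cells_mu by blast
    moreover have "T (i, j) < T (i, Suc j)" if "(i, Suc j) \<in> cells mu"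
      using T that by (simp add: SYT_def)
    ultimately show ?thesis
      using T_less[of "(i, j)"] ij cells_mu by (cases "(i, Suc j) = (a, b)") auto
  qed
  moreover have "?T (i, j) < ?T (Suc i, j)" if ij: "(Suc i, j) \<in> cells lam" for i j
  proof -
    have "(i, j) \<in> cells mu"
      using cells_up[OF p ij] ij below unfolding cells_mu by blast
    moreover have "T (i, j) < T (Suc i, j)" if "(Suc i, j) \<in> cells mu"
      using T that by (simp add: SYT_def)
    ultimately show ?thesis
      using T_less[of "(i, j)"] ij cells_mu by (cases "(Suc i, j) = (a, b)") auto
  qed
  moreover have "\<forall>x. x \<notin> cells lam \<longrightarrow> ?T x = 0"
    using T c cells_mu by (auto simp: SYT_def)
  ultimately show ?thesis
    unfolding SYT_def by blast
qed

lemma bij_betw_SYT_remove_corner: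
  assumes p: "is_partition lam" and c: "corner lam i"
  shows "bij_betw (\<lambda>T. T((i, lam ! i - 1) := 0))
    {T \<in> SYT lam. T (i, lam ! i - 1) = psize lam} (SYT (remove_corner lam i))"
proof (rule bij_betw_byWitness[where f' = "\<lambda>T. T((i, lam ! i - 1) := psize lam)"])
  have no_successor: "(i, Suc (lam ! i - 1)) \<notin> cells lam" "(Suc i, lam ! i - 1) \<notin> cells lam"
    using c partition_nth_pos[OF p, of i] by (auto simp: corner_def mem_cells_iff)
  show "(\<lambda>T. T((i, lam ! i - 1) := 0)) ` {T \<in> SYT lam. T (i, lam ! i - 1) = psize lam}
      \<subseteq> SYT (remove_corner lam i)"
    using SYT_remove_max_entry is_partition_remove_corner[OF p c] corner_cell_mem[OF p c]
      cells_remove_corner[OF p c] by auto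
  show "(\<lambda>T. T((i, lam ! i - 1) := psize lam)) ` SYT (remove_corner lam i)
      \<subseteq> {T \<in> SYT lam. T (i, lam ! i - 1) = psize lam}"
    using SYT_add_max_entry[OF _ p corner_cell_mem[OF p c] cells_remove_corner[OF p c] no_successor]
    by auto
  show "\<forall>T\<in>SYT (remove_corner lam i). (T((i, lam ! i - 1) := psize lam))((i, lam ! i - 1) := 0) = T"
    using cells_remove_corner[OF p c] by (auto simp: SYT_def)
qed auto

lemma num_SYT_recurrence:
  assumes p: "is_partition lam" and ne: "lam \<noteq> []"
  shows "num_SYT lam = (\<Sum>i | corner lam i. num_SYT (remove_corner lam i))"
proof -
  define S where "S i = {T \<in> SYT lam. T (i, lam ! i - 1) = psize lam}" for i
  have "SYT lam = (\<Union>i\<in>{i. corner lam i}. S i)"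
    using SYT_max_entry_at_corner[OF _ p ne] by (auto simp: S_def)
  then have "num_SYT lam = card (\<Union>i\<in>{i. corner lam i}. S i)"
    by (simp add: num_SYT_def)
  also have "\<dots> = (\<Sum>i | corner lam i. card (S i))"
  proof (rule card_UN_disjoint)
    show "\<forall>i\<in>{i. corner lam i}. \<forall>j\<in>{i. corner lam i}. i \<noteq> j \<longrightarrow> S i \<inter> S j = {}"
    proof (intro ballI impI)
      fix i j assume "i \<in> {i. corner lam i}" "j \<in> {i. corner lam i}" "i \<noteq> j"
      show "S i \<inter> S j = {}"
      proof (rule ccontr)
        assume "S i \<inter> S j \<noteq> {}"
        then obtain T where "T \<in> S i" "T \<in> S j"
          by blast
        then have "T \<in> SYT lam" "T (i, lam ! i - 1) = T (j, lam ! j - 1)"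
          by (simp_all add: S_def)
        then have "(i, lam ! i - 1) = (j, lam ! j - 1)"
          using corner_cell_mem[OF p] \<open>i \<in> _\<close> \<open>j \<in> _\<close>
          by (auto simp: SYT_def bij_betw_def dest: inj_onD)
        then show False
          using \<open>i \<noteq> j\<close> by simp
      qed
    qed
  qed (auto simp: S_def finite_corners intro: finite_subset[OF _ finite_SYT])
  also have "\<dots> = (\<Sum>i | corner lam i. num_SYT (remove_corner lam i))"
    using bij_betw_SYT_remove_corner[OF p] unfolding num_SYT_def S_def
    by (intro sum.cong refl) (auto intro: bij_betw_same_card)
  finally show ?thesis .
qed

section \<open>Factorial-normalised Wronskians of partitions\<close>

definition divided_appell :: "(nat \<Rightarrow> complex poly) \<Rightarrow> bool" where
  "divided_appell a \<longleftrightarrow> a 0 = 1 \<and> (\<forall>n. pderiv (a (Suc n)) = a n)"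

definition divided_seq :: "(nat \<Rightarrow> complex poly) \<Rightarrow> nat \<Rightarrow> complex poly" where
  "divided_seq A n = smult (inverse (fact n)) (A n)"

definition partition_wronskian :: "(nat \<Rightarrow> complex poly) \<Rightarrow> nat list \<Rightarrow> complex poly" where
  "partition_wronskian a lam = wronskian (length lam) (\<lambda>k. a (degs lam k))"

lemma divided_appell_divided_seq:
  assumes "appell A"
  shows "divided_appell (divided_seq A)"
  unfolding divided_appell_def
proof (intro conjI allI)
  show "divided_seq A 0 = 1"
    using assms by (simp add: appell_def divided_seq_def)
  fix n
  have "pderiv (A (Suc n)) = smult (of_nat (Suc n)) (A n)"
    using assms by (simp add: appell_def of_nat_poly)
  then show "pderiv (divided_seq A (Suc n)) = divided_seq A n"
    by (simp add: divided_seq_def pderiv_smult field_simps del: of_nat_Suc)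
qed

lemma divided_appell_monomials: "divided_appell (\<lambda>n. monom (inverse (fact n)) n)"
  by (simp add: divided_appell_def pderiv_monom field_simps monom_0 one_pCons del: of_nat_Suc)

lemma pderiv_divided_appell:
  "divided_appell a \<Longrightarrow> 0 < m \<Longrightarrow> pderiv (a m) = a (m - 1)"
  by (cases m) (auto simp: divided_appell_def)

lemma degs_pos: "is_partition lam \<Longrightarrow> k < length lam \<Longrightarrow> 0 < degs lam k"
  using partition_nth_pos[of lam "length lam - 1 - k"] by (simp add: degs_def)

lemma degs_strict_mono:
  assumes "is_partition lam" "k < l" "l < length lam"
  shows "degs lam k < degs lam l"
proof -
  have "lam ! (length lam - 1 - k) \<le> lam ! (length lam - 1 - l)"
    using partition_nth_antimono[OF assms(1), of "length lam - 1 - l" "length lam - 1 - k"] assms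
    by simp
  then show ?thesis
    using assms(2) by (simp add: degs_def)
qed

lemma sum_degs: "(\<Sum>k<length lam. degs lam k) = psize lam + (\<Sum>k<length lam. k)"
proof -
  have "(\<Sum>k<length lam. lam ! (length lam - Suc k)) = (\<Sum>k<length lam. lam ! k)"
    by (rule sum.nat_diff_reindex)
  then show ?thesis
    by (simp add: degs_def sum.distrib psize_def sum_list_sum_nth atLeast0LessThan)
qed

text \<open>Differentiating column \<open>k = r - 1 - i\<close> lowers \<open>n\<^sub>k\<close> by one, i.e. removes the last cell of
  row \<open>i\<close>; this gives a repeated column unless row \<open>i\<close> ends in a corner.\<close>
lemma wronskian_lower_degree_non_corner:
  assumes p: "is_partition lam" and i: "i < length lam" "\<not> corner lam i"
  shows "wronskian (length lam) ((\<lambda>k. a (degs lam k))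
    (length lam - Suc i := a (degs lam (length lam - Suc i) - 1))) = 0"
proof -
  let ?k = "length lam - Suc i"
  have "Suc i < length lam" "lam ! Suc i = lam ! i"
    using i partition_nth_antimono[OF p, of i "Suc i"] by (auto simp: corner_def)
  then have "0 < ?k" "degs lam (?k - 1) = degs lam ?k - 1"
    by (auto simp: degs_def Suc_diff_Suc)
  then show ?thesis
    by (intro wronskian_equal_columns[of ?k "?k - 1"]) auto
qed

lemma wronskian_lower_degree_corner:
  assumes a: "divided_appell a" and p: "is_partition lam" and c: "corner lam i"
  shows "wronskian (length lam) ((\<lambda>k. a (degs lam k))
    (length lam - Suc i := a (degs lam (length lam - Suc i) - 1))) =
    partition_wronskian a (remove_corner lam i)"
proof (cases "lam ! i = 1")
  case True
  then have r: "length lam = Suc i"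
    using corner_last_row[OF p c] by simp
  have "degs lam 0 = 1"
    using True r by (simp add: degs_def)
  then have "wronskian (length lam) ((\<lambda>k. a (degs lam k))(length lam - Suc i := a (degs lam (length lam - Suc i) - 1)))
      = wronskian i (\<lambda>j. pderiv (a (degs lam (Suc j))))"
    using a r by (simp add: wronskian_first_one divided_appell_def)
  also have "\<dots> = wronskian i (\<lambda>j. a (degs (take i lam) j))"
    using a degs_pos[OF p] r by (intro wronskian_cong) (simp add: pderiv_divided_appell degs_def min_def)
  finally show ?thesis
    using True r by (simp add: partition_wronskian_def remove_corner_def)
next
  case False
  have "lam ! i \<noteq> 0"
    using partition_nth_pos[OF p] c by (simp add: corner_def)
  then have "remove_corner lam i = lam[i := lam ! i - 1]"
    using False by (simp add: remove_corner_def)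
  moreover have "a (degs (lam[i := lam ! i - 1]) k) =
      ((\<lambda>k. a (degs lam k))(length lam - Suc i := a (degs lam (length lam - Suc i) - 1))) k"
    if "k < length lam" for k
    using that c \<open>lam ! i \<noteq> 0\<close> by (auto simp: degs_def corner_def nth_list_update)
  ultimately show ?thesis
    unfolding partition_wronskian_def by (auto intro: wronskian_cong)
qed

lemma pderiv_partition_wronskian:
  assumes a: "divided_appell a" and p: "is_partition lam"
  shows "pderiv (partition_wronskian a lam) =
    (\<Sum>i | corner lam i. partition_wronskian a (remove_corner lam i))"
proof -
  let ?r = "length lam" and ?f = "\<lambda>k. a (degs lam k)"
  let ?W = "\<lambda>k. wronskian ?r (?f(k := a (degs lam k - 1)))"
  have "pderiv (partition_wronskian a lam) = (\<Sum>k<?r. wronskian ?r (?f(k := pderiv (?f k))))"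
    unfolding partition_wronskian_def by (rule pderiv_wronskian)
  also have "\<dots> = (\<Sum>k<?r. ?W k)"
    using a degs_pos[OF p] by (intro sum.cong refl) (simp add: pderiv_divided_appell)
  also have "\<dots> = (\<Sum>i<?r. ?W (?r - Suc i))"
    by (rule sum.nat_diff_reindex[symmetric])
  also have "\<dots> = (\<Sum>i | corner lam i. ?W (?r - Suc i))"
    using wronskian_lower_degree_non_corner[OF p]
    by (intro sum.mono_neutral_right) (auto simp: corner_def)
  also have "\<dots> = (\<Sum>i | corner lam i. partition_wronskian a (remove_corner lam i))"
    using wronskian_lower_degree_corner[OF a p] by (intro sum.cong) auto
  finally show ?thesis .
qed

section \<open>Frobenius' formula and the main theorem\<close>

definition frobenius_ratio :: "nat list \<Rightarrow> complex" where
  "frobenius_ratio lam = of_int (vandermonde_int (length lam) (degs lam)) /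
     (\<Prod>k<length lam. fact (degs lam k))"

lemma partition_wronskian_monomials:
  "partition_wronskian (\<lambda>n. monom (inverse (fact n)) n) lam = monom (frobenius_ratio lam) (psize lam)"
proof -
  let ?r = "length lam"
  have "partition_wronskian (\<lambda>n. monom (inverse (fact n)) n) lam =
      smult (\<Prod>k<?r. inverse (fact (degs lam k))) (wronskian ?r (\<lambda>k. monom 1 (degs lam k)))"
    unfolding partition_wronskian_def by (subst wronskian_smult[symmetric]) (simp add: smult_monom)
  also have "wronskian ?r (\<lambda>k. monom 1 (degs lam k)) =
      smult (of_int (vandermonde_int ?r (degs lam))) (monom 1 (psize lam))"
    by (simp add: wronskian_monomials det_falling_factorial_vandermonde sum_degs
        vandermonde_int_def of_int_prod)
  also have "(\<Prod>k<?r. inverse (fact (degs lam k))) = inverse (\<Prod>k<?r. fact (degs lam k) :: complex)"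
    using prod_inversef[of "\<lambda>k. fact (degs lam k)"] by (simp add: comp_def)
  finally show ?thesis
    by (simp add: frobenius_ratio_def smult_monom divide_inverse mult.commute)
qed

lemma frobenius_ratio_recurrence:
  assumes p: "is_partition lam"
  shows "of_nat (psize lam) * frobenius_ratio lam = (\<Sum>i | corner lam i. frobenius_ratio (remove_corner lam i))"
proof -
  have "monom (of_nat (psize lam) * frobenius_ratio lam) (psize lam - 1) =
      (\<Sum>i | corner lam i. monom (frobenius_ratio (remove_corner lam i)) (psize lam - 1))"
    using pderiv_partition_wronskian[OF divided_appell_monomials p] psize_remove_corner[OF p]
    by (simp add: partition_wronskian_monomials pderiv_monom)
  then have "coeff (monom (of_nat (psize lam) * frobenius_ratio lam) (psize lam - 1)) (psize lam - 1) =
      coeff (\<Sum>i | corner lam i. monom (frobenius_ratio (remove_corner lam i)) (psize lam - 1)) (psize lam - 1)"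
    by (rule arg_cong)
  then show ?thesis
    by (simp add: coeff_sum)
qed

lemma num_SYT_frobenius:
  assumes "is_partition lam"
  shows "of_nat (num_SYT lam) = fact (psize lam) * frobenius_ratio lam"
  using assms
proof (induction "psize lam" arbitrary: lam rule: less_induct)
  case less
  show ?case
  proof (cases "lam = []")
    case True
    have "SYT [] = {\<lambda>_. 0}"
      by (auto simp: SYT_def cells_def psize_def bij_betw_def)
    with True show ?thesis
      by (simp add: num_SYT_def frobenius_ratio_def vandermonde_int_def psize_def)
  next
    case False
    have "of_nat (num_SYT lam) = (\<Sum>i | corner lam i. of_nat (num_SYT (remove_corner lam i)) :: complex)"
      by (simp add: num_SYT_recurrence[OF less.prems False])
    also have "\<dots> = (\<Sum>i | corner lam i. fact (psize lam - 1) * frobenius_ratio (remove_corner lam i))"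
      using less.hyps is_partition_remove_corner[OF less.prems] psize_remove_corner[OF less.prems]
      by (intro sum.cong) auto
    also have "\<dots> = fact (psize lam) * frobenius_ratio lam"
      using psize_pos[OF less.prems False]
      by (simp add: frobenius_ratio_recurrence[OF less.prems, symmetric] sum_distrib_left[symmetric]
          fact_reduce)
    finally show ?thesis .
  qed
qed

lemma wronskian_appell_eq:
  "wronskian_appell A lam =
    smult (inverse (of_int (vandermonde_int (length lam) (degs lam)))) (wronskian (length lam) (\<lambda>k. A (degs lam k)))"
  by (simp add: wronskian_appell_def wronskian_def vandermonde_int_def det_dim_zero)

lemma pderiv_of_nat_mult: "pderiv (of_nat n * p) = of_nat n * pderiv p"
  by (simp add: pderiv_mult)

lemma num_SYT_mult_wronskian_appell:
  assumes p: "is_partition lam"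
  shows "of_nat (num_SYT lam) * wronskian_appell A lam =
    of_nat (fact (psize lam)) * partition_wronskian (divided_seq A) lam"
proof -
  let ?Wr = "wronskian (length lam) (\<lambda>k. A (degs lam k))"
  let ?D = "of_int (vandermonde_int (length lam) (degs lam)) :: complex"
  let ?P = "\<Prod>k<length lam. fact (degs lam k) :: complex"
  have "?D \<noteq> 0"
    using degs_strict_mono[OF p] by (auto simp: vandermonde_int_def) (metis order_less_irrefl)
  then have "inverse ?D * of_nat (num_SYT lam) = inverse ?P * of_nat (fact (psize lam))"
    by (simp add: num_SYT_frobenius[OF p] frobenius_ratio_def divide_inverse)
  moreover have "partition_wronskian (divided_seq A) lam = smult (inverse ?P) ?Wr"
    using prod_inversef[of "\<lambda>k. fact (degs lam k) :: complex" "{..<length lam}"]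
    by (simp add: partition_wronskian_def divided_seq_def wronskian_smult comp_def)
  ultimately show ?thesis
    by (simp add: wronskian_appell_eq of_nat_poly del: of_nat_fact)
qed

theorem theorem5p1:
  fixes A :: "nat \<Rightarrow> complex poly" and lam :: "nat list"
  assumes "appell A" and "is_partition lam"
  shows "of_nat (num_SYT lam) * pderiv (wronskian_appell A lam)
         = of_nat (psize lam) *
           (\<Sum>mu\<in>{mu. covered_by mu lam}. of_nat (num_SYT mu) * wronskian_appell A mu)"
proof -
  let ?W = "partition_wronskian (divided_seq A)"
  have "of_nat (num_SYT lam) * pderiv (wronskian_appell A lam) =
      of_nat (fact (psize lam)) * pderiv (?W lam)"
    by (simp only: pderiv_of_nat_mult[symmetric] num_SYT_mult_wronskian_appell[OF assms(2)])
  also have "\<dots> = (\<Sum>i | corner lam i. of_nat (fact (psize lam)) * ?W (remove_corner lam i))"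
    by (simp only: pderiv_partition_wronskian[OF divided_appell_divided_seq[OF assms(1)] assms(2)] sum_distrib_left)
  also have "\<dots> = (\<Sum>i | corner lam i. of_nat (psize lam) *
      (of_nat (num_SYT (remove_corner lam i)) * wronskian_appell A (remove_corner lam i)))"
    using assms(2) by (intro sum.cong) (simp_all add: num_SYT_mult_wronskian_appell
        is_partition_remove_corner psize_remove_corner distrib_right del: of_nat_fact)
  also have "\<dots> = of_nat (psize lam) *
      (\<Sum>mu\<in>{mu. covered_by mu lam}. of_nat (num_SYT mu) * wronskian_appell A mu)"
    using sum.reindex_bij_betw[OF bij_betw_remove_corner[OF assms(2)]] by (simp add: sum_distrib_left)
  finally show ?thesis .
qed

end
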